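(* Let $m\ge1$ and $\mathcal{B}=\mathcal{B}_{1,m}=G_m$ (the block of cells of size $1$). Then $$\langle\chi_{\mathcal{B}},\ \det\cdot\varepsilon\cdot\psi\rangle_{\mathcal{B}}=\frac{\binom{2m}{m}}{4^m},\qquad \langle\chi_{\mathcal{B}},\ \det\cdot\psi\rangle_{\mathcal{B}}=\frac{(-1)^{m+1}}{2m}\cdot\frac{\binom{2m-2}{m-1}}{4^{m-1}}.$$ In particular the first quantity equals $|L_m|/|G_m|$, where $L_m$ is the set of elements of $G_m$ satisfying condition (L).
   Context: $G_m$ is the signed permutation group of bijections of $\{\pm1,\dots,\pm m\}$ commuting with negation; write $g\in G_m$ as $(s_1,\dots,s_m;\sigma)$, $s_i\in\{\pm1\}$, $\sigma\in S_m$ (the signed permutation matrix with $(\sigma(i),i)$ entry $s_i$). Here $\psi\equiv1$, $\varepsilon(g)=\operatorname{sgn}(\sigma)$, and $\det(g)=\operatorname{sgn}(\sigma)$ is the sign of the underlying permutation (signs forgotten). An element $g\in G_m$ satisfies condition (L) if for every $i$ the points $i$ and $-i$ lie in different orbits of $\langle g\rangle$ on $\{\pm1,\dots,\pm m\}$; $\chi_{\mathcal{B}}$ is the indicator of (L). For functions $\alpha,\beta$ on a finite group $H$, $\langle\alpha,\beta\rangle_H=\frac1{|H|}\sum_{h\in H}\alpha(h)\overline{\beta(h)}$. *)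

theory Defs
  imports Complex_Main "HOL-Combinatorics.Permutations"
begin

definition pm_set :: "nat \<Rightarrow> int set" where
  "pm_set m = {i. 1 \<le> \<bar>i\<bar> \<and> \<bar>i\<bar> \<le> int m}"

definition signed_perms :: "nat \<Rightarrow> (int \<Rightarrow> int) set" where
  "signed_perms m = {g. g permutes pm_set m \<and> (\<forall>i\<in>pm_set m. g (- i) = - g i)}"

definition underlying_perm :: "nat \<Rightarrow> (int \<Rightarrow> int) \<Rightarrow> int \<Rightarrow> int" where
  "underlying_perm m g = (\<lambda>i. if 1 \<le> i \<and> i \<le> int m then \<bar>g i\<bar> else i)"

definition det_char :: "nat \<Rightarrow> (int \<Rightarrow> int) \<Rightarrow> complex" where
  "det_char m g = of_int (sign (underlying_perm m g))"

definition eps_char :: "nat \<Rightarrow> (int \<Rightarrow> int) \<Rightarrow> complex" where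
  "eps_char m g = of_int (sign (underlying_perm m g))"

definition psi_char :: "(int \<Rightarrow> int) \<Rightarrow> complex" where
  "psi_char g = 1"

text \<open>Condition (L): for every i, i and -i lie in different orbits of <g>.\<close>
definition cond_L :: "nat \<Rightarrow> (int \<Rightarrow> int) \<Rightarrow> bool" where
  "cond_L m g = (\<forall>i\<in>pm_set m. \<not> (\<exists>k::nat. (g ^^ k) i = - i))"

definition chi_L :: "nat \<Rightarrow> (int \<Rightarrow> int) \<Rightarrow> complex" where
  "chi_L m g = (if cond_L m g then 1 else 0)"

definition L_set :: "nat \<Rightarrow> (int \<Rightarrow> int) set" where
  "L_set m = {g \<in> signed_perms m. cond_L m g}"

definition inner_prod :: "'a set \<Rightarrow> ('a \<Rightarrow> complex) \<Rightarrow> ('a \<Rightarrow> complex) \<Rightarrow> complex" where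
  "inner_prod H \<alpha> \<beta> = (\<Sum>h\<in>H. \<alpha> h * cnj (\<beta> h)) / of_nat (card H)"

end

theory Submission
  imports Defs
begin

text \<open>Every g in G_(m+1) factors uniquely as g = s o h with h in G_m (fixing +-(m+1)) and s the
  signed transposition exchanging m+1 with b = g(m+1). For b in +-{1..m} this inserts m+1 into the
  cycle of h through h^-1(b) and -(m+1) into the cycle through -h^-1(b): orbits grow but do not merge,
  so (L) is inherited, while the underlying permutation picks up a transposition. For b = m+1 the new
  points are fixed, and b = -(m+1) violates (L). Hence |L_(m+1)| = (2m+1) |L_m|, and the signed count
  S_m = sum of sgn(sigma) over L_m obeys S_(m+1) = (1-2m) S_m; with |G_m| = 2^m m! both inner
  products become central binomial coefficients.\<close>

lemma pm_set_0: "pm_set 0 = {}"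
  unfolding pm_set_def by auto

lemma pm_set_Suc: "pm_set (Suc m) = insert (int (Suc m)) (insert (- int (Suc m)) (pm_set m))"
  unfolding pm_set_def by auto

lemma Suc_notin_pm_set: "int (Suc m) \<notin> pm_set m" "- int (Suc m) \<notin> pm_set m"
  unfolding pm_set_def by auto

lemma Suc_in_pm_set_Suc: "int (Suc m) \<in> pm_set (Suc m)"
  unfolding pm_set_def by auto

lemma in_pm_set_neq:
  assumes "x \<in> pm_set m"
  shows "x \<noteq> 0" "x \<noteq> int (Suc m)" "x \<noteq> - int (Suc m)" "x \<noteq> - x"
  using assms unfolding pm_set_def by auto

lemma minus_in_pm_set_iff [simp]: "- x \<in> pm_set m \<longleftrightarrow> x \<in> pm_set m"
  unfolding pm_set_def by auto

lemma finite_pm_set: "finite (pm_set m)"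
  by (induct m) (simp_all add: pm_set_0 pm_set_Suc)

lemma card_pm_set: "card (pm_set m) = 2 * m"
proof (induct m)
  case (Suc m)
  then show ?case
    using Suc_notin_pm_set[of m] finite_pm_set[of m] by (simp add: pm_set_Suc del: of_nat_Suc)
qed (simp add: pm_set_0)

lemma sum_pm_set_Suc:
  "(\<Sum>b\<in>pm_set (Suc m). f b) = f (int (Suc m)) + f (- int (Suc m)) + (\<Sum>b\<in>pm_set m. f b)"
proof -
  have "int (Suc m) \<noteq> - int (Suc m)" by simp
  then show ?thesis
    using Suc_notin_pm_set[of m] by (simp only: pm_set_Suc sum.insert finite_pm_set finite_insert
        insert_iff simp_thms add.assoc)
qed


lemma funpow_odd:
  fixes g :: "'a::group_add \<Rightarrow> 'a"
  assumes "\<And>x. g (- x) = - g x"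
  shows "(g ^^ k) (- x) = - (g ^^ k) x"
  by (induct k) (simp_all add: assms)

lemma funpow_fixpoint: "g x = x \<Longrightarrow> (g ^^ k) x = x"
  by (induct k) simp_all

lemma signed_perms_permutes: "g \<in> signed_perms m \<Longrightarrow> g permutes pm_set m"
  unfolding signed_perms_def by simp

lemma signed_perms_odd:
  assumes "g \<in> signed_perms m"
  shows "g (- x) = - g x"
proof (cases "x \<in> pm_set m")
  case True
  then show ?thesis using assms unfolding signed_perms_def by auto
next
  case False
  then show ?thesis using signed_perms_permutes[OF assms] by (simp add: permutes_not_in)
qed

lemma signed_perms_fixes_Suc:
  assumes "h \<in> signed_perms m"
  shows "h (int (Suc m)) = int (Suc m)" "h (- int (Suc m)) = - int (Suc m)"
  using permutes_not_in[OF signed_perms_permutes[OF assms]] Suc_notin_pm_set by blast+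

lemma signed_perms_0: "signed_perms 0 = {id}"
  unfolding signed_perms_def by (auto simp: pm_set_0)

lemma finite_signed_perms: "finite (signed_perms m)"
proof (rule finite_subset)
  show "signed_perms m \<subseteq> {p. p permutes pm_set m}"
    using signed_perms_permutes by blast
qed (simp add: finite_permutations finite_pm_set)


definition signed_swap :: "int \<Rightarrow> int \<Rightarrow> int \<Rightarrow> int" where
  "signed_swap n b x =
     (if x = n then b else if x = b then n else if x = - n then - b else if x = - b then - n else x)"

lemma signed_swap_self: "signed_swap n n = id"
  unfolding signed_swap_def by auto

lemma signed_swap_involution: "n \<noteq> 0 \<Longrightarrow> b \<noteq> 0 \<Longrightarrow> signed_swap n b (signed_swap n b x) = x"
  unfolding signed_swap_def by auto

lemma signed_swap_odd: "n \<noteq> 0 \<Longrightarrow> b \<noteq> 0 \<Longrightarrow> signed_swap n b (- x) = - signed_swap n b x"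
  unfolding signed_swap_def by auto

lemma abs_signed_swap: "n > 0 \<Longrightarrow> \<bar>signed_swap n b x\<bar> = transpose n \<bar>b\<bar> \<bar>x\<bar>"
  unfolding signed_swap_def transpose_def by (simp add: abs_if split: if_splits)

lemma signed_swap_permutes:
  assumes b: "b \<in> pm_set (Suc m)"
  shows "signed_swap (int (Suc m)) b permutes pm_set (Suc m)"
proof (rule inj_imp_permutes)
  have "b \<noteq> 0" using b by (rule in_pm_set_neq(1))
  then show "inj_on (signed_swap (int (Suc m)) b) (pm_set (Suc m))"
    by (intro inj_on_inverseI[where g = "signed_swap (int (Suc m)) b"])
      (simp add: signed_swap_involution del: of_nat_Suc)
  show "signed_swap (int (Suc m)) b x \<in> pm_set (Suc m)" if "x \<in> pm_set (Suc m)" for x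
    using that b unfolding signed_swap_def by (auto simp: pm_set_Suc)
  show "signed_swap (int (Suc m)) b x = x" if "x \<notin> pm_set (Suc m)" for x
    using that b unfolding signed_swap_def by (auto simp: pm_set_Suc)
qed (rule finite_pm_set)

lemma signed_swap_comp_in_signed_perms:
  assumes h: "h \<in> signed_perms m" and b: "b \<in> pm_set (Suc m)"
  shows "signed_swap (int (Suc m)) b \<circ> h \<in> signed_perms (Suc m)"
proof -
  have "h permutes pm_set (Suc m)"
    using signed_perms_permutes[OF h] by (rule permutes_subset) (auto simp: pm_set_Suc)
  then have "signed_swap (int (Suc m)) b \<circ> h permutes pm_set (Suc m)"
    using signed_swap_permutes[OF b] by (rule permutes_compose)
  moreover have "(signed_swap (int (Suc m)) b \<circ> h) (- x) = - (signed_swap (int (Suc m)) b \<circ> h) x" for x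
    using signed_perms_odd[OF h] signed_swap_odd in_pm_set_neq(1)[OF b] by simp
  ultimately show ?thesis unfolding signed_perms_def by simp
qed

lemma signed_swap_comp_cancel: "b \<noteq> 0 \<Longrightarrow> signed_swap (int (Suc m)) b \<circ> (signed_swap (int (Suc m)) b \<circ> g) = g"
  by (simp add: fun_eq_iff signed_swap_involution del: of_nat_Suc)

lemma signed_swap_comp_at_Suc:
  assumes "h \<in> signed_perms m"
  shows "signed_swap (int (Suc m)) b (h (int (Suc m))) = b"
  using signed_perms_fixes_Suc(1)[OF assms] by (simp add: signed_swap_def)

lemma signed_perms_Suc_factor:
  assumes g: "g \<in> signed_perms (Suc m)"
  shows "g (int (Suc m)) \<in> pm_set (Suc m)"
    and "signed_swap (int (Suc m)) (g (int (Suc m))) \<circ> g \<in> signed_perms m"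
proof -
  define n where "n = int (Suc m)"
  define s where "s = signed_swap n (g n)"
  have gp: "g permutes pm_set (Suc m)" using signed_perms_permutes[OF g] .
  show gn: "g (int (Suc m)) \<in> pm_set (Suc m)" using permutes_in_image[OF gp] Suc_in_pm_set_Suc by blast
  then have b0: "g n \<noteq> 0" unfolding n_def by (rule in_pm_set_neq(1))
  have n0: "n \<noteq> 0" unfolding n_def by simp
  have "(s \<circ> g) n = n" "(s \<circ> g) (- n) = - n"
    using signed_perms_odd[OF g] b0 unfolding s_def by (auto simp: signed_swap_def)
  moreover have "s \<circ> g permutes pm_set (Suc m)"
    using gp signed_swap_permutes[OF gn] unfolding s_def n_def by (rule permutes_compose)
  ultimately have "s \<circ> g permutes pm_set m"
    by (elim permutes_superset) (auto simp: pm_set_Suc n_def)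
  moreover have "(s \<circ> g) (- x) = - (s \<circ> g) x" for x
    using signed_perms_odd[OF g] signed_swap_odd[OF n0 b0] unfolding s_def by simp
  ultimately show "signed_swap (int (Suc m)) (g (int (Suc m))) \<circ> g \<in> signed_perms m"
    unfolding signed_perms_def s_def n_def by simp
qed

lemma bij_betw_signed_perms_Suc:
  "bij_betw (\<lambda>(h, b). signed_swap (int (Suc m)) b \<circ> h)
     (signed_perms m \<times> pm_set (Suc m)) (signed_perms (Suc m))"
proof (rule bij_betw_byWitness[where f' = "\<lambda>g. (signed_swap (int (Suc m)) (g (int (Suc m))) \<circ> g, g (int (Suc m)))"])
  have "g (int (Suc m)) \<noteq> 0" if "g \<in> signed_perms (Suc m)" for g
    using signed_perms_Suc_factor(1)[OF that] by (rule in_pm_set_neq(1))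
  then show "\<forall>g\<in>signed_perms (Suc m). (case (signed_swap (int (Suc m)) (g (int (Suc m))) \<circ> g, g (int (Suc m)))
      of (h, b) \<Rightarrow> signed_swap (int (Suc m)) b \<circ> h) = g"
    by (simp add: signed_swap_comp_cancel del: of_nat_Suc)
qed (auto simp: signed_swap_comp_at_Suc signed_swap_comp_cancel in_pm_set_neq(1)
    signed_swap_comp_in_signed_perms signed_perms_Suc_factor simp del: of_nat_Suc)

lemma sum_signed_perms_Suc:
  "(\<Sum>g\<in>signed_perms (Suc m). f g) =
   (\<Sum>h\<in>signed_perms m. \<Sum>b\<in>pm_set (Suc m). f (signed_swap (int (Suc m)) b \<circ> h))"
  by (simp add: sum.reindex_bij_betw[OF bij_betw_signed_perms_Suc, symmetric]
      sum.cartesian_product split_def)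

lemma card_signed_perms: "card (signed_perms m) = 2 ^ m * fact m"
proof (induct m)
  case (Suc m)
  have "card (signed_perms (Suc m)) = card (signed_perms m) * (2 * Suc m)"
    using bij_betw_same_card[OF bij_betw_signed_perms_Suc] by (simp add: card_cartesian_product card_pm_set)
  then show ?case using Suc by (simp add: algebra_simps)
qed (simp add: signed_perms_0)


text \<open>g is f with the point c spliced into the orbit of a, right after a.\<close>

locale cycle_insertion =
  fixes f g :: "'a \<Rightarrow> 'a" and a c :: 'a
  assumes only_preimage: "\<And>p. f p = c \<Longrightarrow> p = c"
    and g_a: "g a = c" and g_c: "g c = f a"
    and g_other: "\<And>x. x \<noteq> a \<Longrightarrow> x \<noteq> c \<Longrightarrow> g x = f x"
    and a_ne_c: "a \<noteq> c"
begin

lemma funpow_ne: "z \<noteq> c \<Longrightarrow> (f ^^ k) z \<noteq> c"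
  by (induct k) (use only_preimage in auto)

lemma old_orbit_in_new:
  assumes "z \<noteq> c"
  shows "\<exists>k'. (g ^^ k') z = (f ^^ k) z"
proof (induct k)
  case (Suc k)
  then obtain k' where k': "(g ^^ k') z = (f ^^ k) z" by blast
  show ?case
  proof (cases "(f ^^ k) z = a")
    case True
    then have "(g ^^ Suc (Suc k')) z = (f ^^ Suc k) z" using k' by (simp add: g_a g_c)
    then show ?thesis by blast
  next
    case False
    then have "(g ^^ Suc k') z = (f ^^ Suc k) z" using k' funpow_ne[OF assms] by (simp add: g_other)
    then show ?thesis by blast
  qed
qed (intro exI[of _ 0], simp)

lemma new_orbit_in_old:
  assumes "z \<noteq> c"
  shows "(g ^^ k) z \<noteq> c \<Longrightarrow> \<exists>k'. (f ^^ k') z = (g ^^ k) z"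
proof (induct k rule: less_induct)
  case (less k)
  show ?case
  proof (cases k)
    case (Suc j)
    show ?thesis
    proof (cases "(g ^^ j) z = c")
      case False
      then obtain k' where k': "(f ^^ k') z = (g ^^ j) z" using less Suc by blast
      have "(g ^^ j) z \<noteq> a" using less(2) Suc g_a by auto
      then have "(f ^^ Suc k') z = (g ^^ k) z" using k' False Suc by (simp add: g_other)
      then show ?thesis by blast
    next
      case True
      \<comment> \<open>the step before c must have been a, since c has no other g-preimage\<close>
      then obtain i where j: "j = Suc i" using assms by (cases j) auto
      have c_step: "g ((g ^^ i) z) = c" using True j by simp
      have "(g ^^ i) z \<noteq> c" using c_step g_c only_preimage a_ne_c by auto
      then have "(g ^^ i) z = a" using c_step g_other only_preimage by fastforce
      then obtain k' where "(f ^^ k') z = a" using less Suc j a_ne_c by force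
      then have "(f ^^ Suc k') z = (g ^^ k) z" using True Suc g_c by simp
      then show ?thesis by blast
    qed
  qed (intro exI[of _ 0], simp)
qed

lemma reaches_iff:
  assumes "z \<noteq> c" "w \<noteq> c"
  shows "(\<exists>k. (g ^^ k) z = w) \<longleftrightarrow> (\<exists>k. (f ^^ k) z = w)"
  using old_orbit_in_new[OF assms(1)] new_orbit_in_old[OF assms(1)] assms(2) by metis

end

lemma funpow_reaches_preimage:
  assumes "(g ^^ k) z = w" "z \<noteq> w" "z \<noteq> p" "\<And>y. g y = w \<Longrightarrow> y = p"
  shows "\<exists>k'. (g ^^ k') (g z) = p"
proof -
  obtain j where j: "k = Suc j" using assms(1,2) by (cases k) auto
  then have "(g ^^ j) z = p" using assms(1,4) by simp
  moreover obtain i where "j = Suc i" using calculation assms(3) by (cases j) auto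
  ultimately have "(g ^^ i) (g z) = p" by (simp add: funpow_Suc_right del: funpow.simps)
  then show ?thesis by blast
qed


lemma signed_swap_comp_apply:
  assumes h: "h \<in> signed_perms m" and a: "a \<in> pm_set m" and b: "h a = b"
  defines "n \<equiv> int (Suc m)" and "g \<equiv> signed_swap (int (Suc m)) b \<circ> h"
  shows "g a = n" "g n = b" "g (- a) = - n" "g (- n) = - b"
    and "\<And>x. x \<noteq> a \<Longrightarrow> x \<noteq> - a \<Longrightarrow> x \<noteq> n \<Longrightarrow> x \<noteq> - n \<Longrightarrow> g x = h x"
proof -
  have "b \<in> pm_set m" using permutes_in_image[OF signed_perms_permutes[OF h]] a b by blast
  note b_neq = in_pm_set_neq[OF this, folded n_def]
  note fix_n = signed_perms_fixes_Suc[OF h, folded n_def]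
  note odd = signed_perms_odd[OF h]
  have "n \<noteq> - n" unfolding n_def by simp
  then show "g a = n" "g n = b" "g (- a) = - n" "g (- n) = - b"
    using b b_neq fix_n odd unfolding g_def n_def[symmetric] by (auto simp: signed_swap_def)
  fix x assume x: "x \<noteq> a" "x \<noteq> - a" "x \<noteq> n" "x \<noteq> - n"
  have "inj h" using permutes_inj[OF signed_perms_permutes[OF h]] .
  then have "h x \<noteq> h a" "h x \<noteq> h (- a)" "h x \<noteq> h n" "h x \<noteq> h (- n)"
    using x by (simp_all add: inj_eq)
  then have "h x \<noteq> b" "h x \<noteq> - b" "h x \<noteq> n" "h x \<noteq> - n"
    using fix_n odd[of a] b by simp_all
  then show "g x = h x" unfolding g_def n_def[symmetric] by (simp add: signed_swap_def)
qed

lemma signed_swap_comp_reaches_iff: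
  assumes h: "h \<in> signed_perms m" and a: "a \<in> pm_set m" and b: "h a = b"
    and z: "z \<in> pm_set m" and w: "w \<in> pm_set m"
  shows "(\<exists>k. ((signed_swap (int (Suc m)) b \<circ> h) ^^ k) z = w) \<longleftrightarrow> (\<exists>k. (h ^^ k) z = w)"
proof -
  define n where "n = int (Suc m)"
  define g where "g = signed_swap n b \<circ> h"
  note g_at = signed_swap_comp_apply[OF h a b, folded n_def, folded g_def]
  have "inj h" using permutes_inj[OF signed_perms_permutes[OF h]] .
  note fix_n = signed_perms_fixes_Suc[OF h, folded n_def]
  note a_neq = in_pm_set_neq[OF a, folded n_def]
  have "b \<in> pm_set m" using permutes_in_image[OF signed_perms_permutes[OF h]] a b by blast
  note b_neq = in_pm_set_neq[OF this, folded n_def]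
  \<comment> \<open>g arises from h in two steps: first n is inserted after a, then -n after -a\<close>
  define f where "f x = (if x = a then n else if x = n then b else h x)" for x
  interpret first: cycle_insertion h f a n
  proof unfold_locales
    show "p = n" if "h p = n" for p using injD[OF \<open>inj h\<close>, of p n] that fix_n by simp
  qed (use a_neq fix_n b in \<open>auto simp: f_def\<close>)
  have n_neq: "n \<noteq> - n" unfolding n_def by simp
  interpret second: cycle_insertion f g "- a" "- n"
  proof unfold_locales
    show "g (- a) = - n" by (rule g_at(3))
    show "g (- n) = f (- a)" using g_at(4) a_neq signed_perms_odd[OF h, of a] b by (auto simp: f_def)
    show "p = - n" if "f p = - n" for p
    proof -
      have "p \<noteq> a" "p \<noteq> n" using that n_neq a_neq b_neq by (auto simp: f_def)
      then have "h p = h (- n)" using that fix_n by (simp add: f_def)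
      then show ?thesis using injD[OF \<open>inj h\<close>] by blast
    qed
    show "g x = f x" if "x \<noteq> - a" "x \<noteq> - n" for x
      using that g_at by (auto simp: f_def)
    show "- a \<noteq> - n" using a_neq by simp
  qed
  have "z \<noteq> n" "z \<noteq> - n" "w \<noteq> n" "w \<noteq> - n"
    using in_pm_set_neq[OF z] in_pm_set_neq[OF w] unfolding n_def by auto
  then have "(\<exists>k. (g ^^ k) z = w) \<longleftrightarrow> (\<exists>k. (h ^^ k) z = w)"
    using first.reaches_iff[of z w] second.reaches_iff[of z w] by simp
  then show ?thesis unfolding g_def n_def .
qed

lemma cond_L_signed_swap_comp:
  assumes h: "h \<in> signed_perms m" and b: "b \<in> pm_set m"
  shows "cond_L (Suc m) (signed_swap (int (Suc m)) b \<circ> h) = cond_L m h"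
proof -
  have "b \<in> h ` pm_set m" using b permutes_image[OF signed_perms_permutes[OF h]] by simp
  then obtain a where a: "a \<in> pm_set m" "h a = b" by (elim imageE) simp
  define n where "n = int (Suc m)"
  define g where "g = signed_swap n b \<circ> h"
  note reach = signed_swap_comp_reaches_iff[OF h a, folded n_def, folded g_def]
  note g_at = signed_swap_comp_apply[OF h a, folded n_def, folded g_def]
  have g_sp: "g \<in> signed_perms (Suc m)"
    unfolding g_def n_def by (rule signed_swap_comp_in_signed_perms[OF h]) (simp add: pm_set_Suc b)
  have n_not_to_minus_n: "\<not> (\<exists>k. (g ^^ k) n = - n)" if L: "cond_L m h"
    \<comment> \<open>a g-path n \<mapsto> b \<leadsto> -a \<mapsto> -n would give an h-path b \<leadsto> -a \<mapsto> -b\<close>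
  proof
    assume "\<exists>k. (g ^^ k) n = - n"
    then obtain k where k: "(g ^^ k) n = - n" ..
    have "inj g" using permutes_inj[OF signed_perms_permutes[OF g_sp]] .
    have preimage: "y = - a" if "g y = - n" for y
      using injD[OF \<open>inj g\<close>, of y "- a"] that g_at(3) by simp
    have "n \<noteq> - n" "n \<noteq> - a" using in_pm_set_neq[OF a(1)] unfolding n_def by auto
    then have "\<exists>k'. (g ^^ k') b = - a"
      using funpow_reaches_preimage[OF k _ _ preimage] g_at(2) by simp
    then have "\<exists>k'. (h ^^ k') b = - a" using reach[of b "- a"] b a(1) by simp
    then obtain k' where "(h ^^ k') b = - a" ..
    then have "(h ^^ Suc k') b = - b" using signed_perms_odd[OF h] a(2) by simp
    then show False using L b unfolding cond_L_def by blast
  qed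
  have "(g ^^ k) (- n) = n \<longleftrightarrow> (g ^^ k) n = - n" for k
    using funpow_odd[of g k n, OF signed_perms_odd[OF g_sp]] by auto
  then have "cond_L (Suc m) g \<longleftrightarrow>
      \<not> (\<exists>k. (g ^^ k) n = - n) \<and> (\<forall>i\<in>pm_set m. \<not> (\<exists>k. (g ^^ k) i = - i))"
    unfolding cond_L_def pm_set_Suc n_def[symmetric] by simp
  also have "\<dots> \<longleftrightarrow> \<not> (\<exists>k. (g ^^ k) n = - n) \<and> cond_L m h"
    using reach unfolding cond_L_def by simp
  finally show ?thesis using n_not_to_minus_n unfolding g_def n_def by blast
qed

lemma cond_L_Suc:
  assumes h: "h \<in> signed_perms m"
  shows "cond_L (Suc m) h = cond_L m h"
proof -
  define n where "n = int (Suc m)"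
  have "h n = n" "h (- n) = - n" using signed_perms_fixes_Suc[OF h] unfolding n_def by simp_all
  then have "(h ^^ k) n = n" "(h ^^ k) (- n) = - n" for k by (simp_all add: funpow_fixpoint)
  moreover have "n \<noteq> - n" unfolding n_def by simp
  ultimately have "\<not> (\<exists>k. (h ^^ k) n = - n)" "\<not> (\<exists>k. (h ^^ k) (- n) = - (- n))" by auto
  then show ?thesis unfolding cond_L_def pm_set_Suc n_def[symmetric] by simp
qed

lemma not_cond_L_signed_swap_minus:
  assumes h: "h \<in> signed_perms m"
  shows "\<not> cond_L (Suc m) (signed_swap (int (Suc m)) (- int (Suc m)) \<circ> h)"
proof -
  have "((signed_swap (int (Suc m)) (- int (Suc m)) \<circ> h) ^^ 1) (int (Suc m)) = - int (Suc m)"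
    using signed_perms_fixes_Suc(1)[OF h] by (simp add: signed_swap_def)
  then show ?thesis unfolding cond_L_def using Suc_in_pm_set_Suc by blast
qed

lemma sum_signed_swaps_cond_L:
  assumes h: "h \<in> signed_perms m"
  shows "(\<Sum>b\<in>pm_set (Suc m). if cond_L (Suc m) (signed_swap (int (Suc m)) b \<circ> h) then w b else 0)
       = (if cond_L m h then w (int (Suc m)) + (\<Sum>b\<in>pm_set m. w b) else (0::'a::comm_monoid_add))"
proof -
  have "(\<Sum>b\<in>pm_set m. if cond_L (Suc m) (signed_swap (int (Suc m)) b \<circ> h) then w b else 0)
      = (\<Sum>b\<in>pm_set m. if cond_L m h then w b else 0)"
    by (rule sum.cong) (simp_all only: cond_L_signed_swap_comp[OF h])
  then show ?thesis
    unfolding sum_pm_set_Suc signed_swap_self id_comp cond_L_Suc[OF h]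
    using not_cond_L_signed_swap_minus[OF h] by simp
qed


lemma underlying_perm_permutes:
  assumes h: "h \<in> signed_perms m"
  shows "underlying_perm m h permutes {1..int m}"
proof (rule inj_imp_permutes)
  have in_pm: "i \<in> pm_set m" if "i \<in> {1..int m}" for i using that unfolding pm_set_def by auto
  have "inj h" using permutes_inj[OF signed_perms_permutes[OF h]] .
  show "inj_on (underlying_perm m h) {1..int m}"
  proof (rule inj_onI)
    fix x y assume x: "x \<in> {1..int m}" and y: "y \<in> {1..int m}"
      and "underlying_perm m h x = underlying_perm m h y"
    then have "h x = h y \<or> h x = h (- y)"
      using signed_perms_odd[OF h] unfolding underlying_perm_def by (auto simp: abs_eq_iff)
    then have "x = y \<or> x = - y" using \<open>inj h\<close> by (simp add: inj_eq)
    then show "x = y" using x y by auto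
  qed
  show "underlying_perm m h x \<in> {1..int m}" if "x \<in> {1..int m}" for x
  proof -
    have "h x \<in> pm_set m" using permutes_in_image[OF signed_perms_permutes[OF h]] in_pm[OF that] by blast
    then show ?thesis using that unfolding underlying_perm_def pm_set_def by auto
  qed
  show "underlying_perm m h x = x" if "x \<notin> {1..int m}" for x
    using that unfolding underlying_perm_def by auto
qed simp

lemma underlying_perm_Suc:
  assumes h: "h \<in> signed_perms m"
  shows "underlying_perm (Suc m) h = underlying_perm m h"
proof
  fix x
  show "underlying_perm (Suc m) h x = underlying_perm m h x"
    using signed_perms_fixes_Suc(1)[OF h] unfolding underlying_perm_def
    by (cases "x = int (Suc m)") auto
qed

lemma underlying_perm_signed_swap_comp:
  assumes h: "h \<in> signed_perms m" and b: "b \<in> pm_set m"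
  shows "underlying_perm (Suc m) (signed_swap (int (Suc m)) b \<circ> h)
       = transpose (int (Suc m)) \<bar>b\<bar> \<circ> underlying_perm m h"
proof
  fix i
  have b_range: "1 \<le> \<bar>b\<bar>" "\<bar>b\<bar> \<le> int m" using b unfolding pm_set_def by auto
  show "underlying_perm (Suc m) (signed_swap (int (Suc m)) b \<circ> h) i
      = (transpose (int (Suc m)) \<bar>b\<bar> \<circ> underlying_perm m h) i"
  proof (cases "1 \<le> i \<and> i \<le> int (Suc m)")
    case True
    then have "underlying_perm m h i = \<bar>h i\<bar>"
      using signed_perms_fixes_Suc(1)[OF h] unfolding underlying_perm_def
      by (cases "i = int (Suc m)") auto
    then show ?thesis using True abs_signed_swap[of "int (Suc m)"] unfolding underlying_perm_def by simp
  next
    case False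
    then show ?thesis using b_range unfolding underlying_perm_def by auto
  qed
qed

lemma sign_underlying_perm_signed_swap_comp:
  assumes h: "h \<in> signed_perms m" and b: "b \<in> pm_set m"
  shows "sign (underlying_perm (Suc m) (signed_swap (int (Suc m)) b \<circ> h))
       = - (sign (underlying_perm m h) :: int)"
proof -
  have "\<bar>b\<bar> \<noteq> int (Suc m)" using b unfolding pm_set_def by auto
  moreover have "permutation (underlying_perm m h)"
    using underlying_perm_permutes[OF h] permutes_imp_permutation by blast
  ultimately show ?thesis unfolding underlying_perm_signed_swap_comp[OF h b]
    by (simp add: sign_compose permutation_swap_id sign_swap_id)
qed


definition L_sign_sum :: "nat \<Rightarrow> int" where
  "L_sign_sum m = (\<Sum>g\<in>L_set m. sign (underlying_perm m g))"

lemma sum_L_set: "(\<Sum>g\<in>L_set m. f g) = (\<Sum>g\<in>signed_perms m. if cond_L m g then f g else 0)"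
  unfolding L_set_def by (rule sum.inter_filter[OF finite_signed_perms])

lemma sum_L_set_Suc:
  "(\<Sum>g\<in>L_set (Suc m). f g)
   = (\<Sum>h\<in>L_set m. f h + (\<Sum>b\<in>pm_set m. f (signed_swap (int (Suc m)) b \<circ> h)))"
proof -
  have "(\<Sum>b\<in>pm_set (Suc m).
          if cond_L (Suc m) (signed_swap (int (Suc m)) b \<circ> h) then f (signed_swap (int (Suc m)) b \<circ> h) else 0)
      = (if cond_L m h then f h + (\<Sum>b\<in>pm_set m. f (signed_swap (int (Suc m)) b \<circ> h)) else 0)"
    if "h \<in> signed_perms m" for h
    using sum_signed_swaps_cond_L[OF that, of "\<lambda>b. f (signed_swap (int (Suc m)) b \<circ> h)"]
    by (simp only: signed_swap_self id_comp)
  then show ?thesis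
    unfolding sum_L_set sum_signed_perms_Suc by (rule sum.cong[OF refl])
qed

lemma card_L_set_Suc: "card (L_set (Suc m)) = (2 * m + 1) * card (L_set m)"
  unfolding card_eq_sum sum_L_set_Suc by (simp add: card_pm_set)

lemma L_sign_sum_Suc: "L_sign_sum (Suc m) = (1 - 2 * int m) * L_sign_sum m"
proof -
  have "sign (underlying_perm (Suc m) h)
        + (\<Sum>b\<in>pm_set m. sign (underlying_perm (Suc m) (signed_swap (int (Suc m)) b \<circ> h)))
      = (1 - 2 * int m) * sign (underlying_perm m h)" if "h \<in> L_set m" for h
  proof -
    have h: "h \<in> signed_perms m" using that unfolding L_set_def by simp
    have "(\<Sum>b\<in>pm_set m. sign (underlying_perm (Suc m) (signed_swap (int (Suc m)) b \<circ> h)))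
        = (\<Sum>b\<in>pm_set m. - sign (underlying_perm m h))"
      by (rule sum.cong[OF refl]) (rule sign_underlying_perm_signed_swap_comp[OF h])
    then show ?thesis by (simp add: underlying_perm_Suc[OF h] card_pm_set algebra_simps)
  qed
  then show ?thesis
    unfolding L_sign_sum_def sum_L_set_Suc sum_distrib_left by (rule sum.cong[OF refl])
qed

lemma L_set_0: "L_set 0 = {id}"
  unfolding L_set_def by (auto simp: signed_perms_0 cond_L_def pm_set_0)

lemma L_sign_sum_Suc_eq_card: "L_sign_sum (Suc m) = (- 1) ^ m * int (card (L_set m))"
proof (induct m)
  case 0
  have "underlying_perm 0 id = id" unfolding underlying_perm_def by auto
  then have "L_sign_sum 0 = 1" unfolding L_sign_sum_def L_set_0 by simp
  then show ?case using L_sign_sum_Suc[of 0] by (simp add: L_set_0)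
next
  case (Suc m)
  have "L_sign_sum (Suc (Suc m)) = (1 - 2 * int (Suc m)) * L_sign_sum (Suc m)"
    by (rule L_sign_sum_Suc)
  also have "\<dots> = (- 1) ^ Suc m * int (card (L_set (Suc m)))"
    unfolding Suc card_L_set_Suc by (simp add: algebra_simps)
  finally show ?case .
qed


lemma central_binomial_pochhammer: "real ((2 * m) choose m) / 4 ^ m = pochhammer (1 / 2) m / fact m"
proof -
  have "real ((2 * m) choose m) = fact (2 * m) / (fact m * fact m)"
    by (simp add: binomial_fact)
  also have "\<dots> = 4 ^ m * pochhammer (1 / 2) m / fact m"
    by (simp add: fact_double power_mult)
  finally show ?thesis by simp
qed

lemma card_L_set_pochhammer: "real (card (L_set m)) = 2 ^ m * pochhammer (1 / 2) m"
proof (induct m)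
  case 0
  then show ?case by (simp add: L_set_0)
next
  case (Suc m)
  then show ?case by (simp add: card_L_set_Suc pochhammer_Suc algebra_simps)
qed

lemma card_L_set_ratio:
  "real (card (L_set m)) / real (card (signed_perms m)) = real ((2 * m) choose m) / 4 ^ m"
  by (simp add: card_L_set_pochhammer card_signed_perms central_binomial_pochhammer)

lemma L_sign_sum_ratio:
  assumes "m \<ge> 1"
  shows "real_of_int (L_sign_sum m) / real (card (signed_perms m))
       = (- 1) ^ (m + 1) / (2 * real m) * (real ((2 * m - 2) choose (m - 1)) / 4 ^ (m - 1))"
proof -
  obtain k where m: "m = Suc k" using assms by (cases m) auto
  have "real_of_int (L_sign_sum m) / real (card (signed_perms m))
      = (- 1) ^ k / (2 * real m) * (real (card (L_set k)) / real (card (signed_perms k)))"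
    unfolding m L_sign_sum_Suc_eq_card card_signed_perms by (simp add: field_simps)
  then show ?thesis unfolding card_L_set_ratio by (simp add: m)
qed

lemma inner_prod_chi_L:
  "inner_prod (signed_perms m) (chi_L m) \<beta> = (\<Sum>g\<in>L_set m. cnj (\<beta> g)) / of_nat (card (signed_perms m))"
proof -
  have "(\<Sum>g\<in>signed_perms m. chi_L m g * cnj (\<beta> g))
      = (\<Sum>g\<in>signed_perms m. if cond_L m g then cnj (\<beta> g) else 0)"
    unfolding chi_L_def by (rule sum.cong) simp_all
  then show ?thesis unfolding inner_prod_def sum_L_set by simp
qed

theorem proposition12:
  fixes m :: nat
  assumes "m \<ge> 1"
  shows "inner_prod (signed_perms m) (chi_L m)
           (\<lambda>g. det_char m g * eps_char m g * psi_char g)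
         = of_real (real ((2*m) choose m) / 4 ^ m)
       \<and> inner_prod (signed_perms m) (chi_L m) (\<lambda>g. det_char m g * psi_char g)
         = of_real ((-1) ^ (m+1) / (2 * real m) * (real ((2*m-2) choose (m-1)) / 4 ^ (m-1)))
       \<and> inner_prod (signed_perms m) (chi_L m)
           (\<lambda>g. det_char m g * eps_char m g * psi_char g)
         = of_real (real (card (L_set m)) / real (card (signed_perms m)))"
proof -
  have "det_char m g * eps_char m g * psi_char g = 1" for g
    unfolding det_char_def eps_char_def psi_char_def by (simp flip: of_int_mult)
  then have L_ratio: "inner_prod (signed_perms m) (chi_L m) (\<lambda>g. det_char m g * eps_char m g * psi_char g)
      = of_real (real (card (L_set m)) / real (card (signed_perms m)))"
    unfolding inner_prod_chi_L by simp
  have "inner_prod (signed_perms m) (chi_L m) (\<lambda>g. det_char m g * psi_char g)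
      = of_real (real_of_int (L_sign_sum m) / real (card (signed_perms m)))"
    unfolding inner_prod_chi_L L_sign_sum_def det_char_def psi_char_def by simp
  then show ?thesis
    using L_ratio card_L_set_ratio L_sign_sum_ratio[OF assms] by simp
qed

end
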